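(* Let $A$ be a metric space and let $a:\mathbb{R}^N\times A\to S^N$, $b:\mathbb{R}^N\times A\to\mathbb{R}^N$, $c:\mathbb{R}^N\times A\to\mathbb{R}$ be continuous. For $\alpha\in A$ set $L^\alpha u:=\mathrm{tr}(a(x,\alpha)D^2u)+b(x,\alpha)\cdot Du$ and $\tilde G[u]:=\sup_{\alpha\in A}\{-L^\alpha u+c(x,\alpha)u\}$. Assume: (i) $\tilde F(x,t,p,X)=\sup_{\alpha\in A}\{-\mathrm{tr}(a(x,\alpha)X)-b(x,\alpha)\cdot p+c(x,\alpha)t\}$ is continuous, $c\ge0$, and $\tilde G$ satisfies the Comparison Principle in every bounded open set $\Omega$ (a viscosity subsolution $u$ and supersolution $v$ of $\tilde G=0$ in $\Omega$ with $u\le v$ on $\partial\Omega$ satisfy $u\le v$ in $\Omega$); (ii) $\tilde G$ satisfies the Strong Minimum Principle: any viscosity supersolution of $\tilde G[v]=0$ in $\mathbb{R}^N$ that attains an interior nonpositive minimum is constant; (iii) there exist $R_o\ge0$ and an upper semicontinuous $W:\mathbb{R}^N\to\mathbb{R}$ with $\tilde G[W]\le0$ in the viscosity sense for $|x|>R_o$ and $\lim_{|x|\to\infty}W(x)=-\infty$. Let $v\in LSC(\mathbb{R}^N)$ be a viscosity supersolution of $\tilde G[v]\ge0$ in $\mathbb{R}^N$ such that $\limsup_{|x|\to\infty}\frac{v(x)}{W(x)}\le0$. If either $v\le0$ or $c\equiv0$, then $v$ is constant.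
   Context: $S^N$ denotes the space of real symmetric $N\times N$ matrices. Sub- and supersolutions are meant in the viscosity sense. *)

theory Defs
  imports "HOL-Analysis.Analysis" "HOL-Library.Liminf_Limsup"
begin

text \<open>Points of R^N are real^'n; S^N is the set of symmetric real^'n^'n matrices.\<close>

definition symmetric_mat :: "real^'n^'n \<Rightarrow> bool" where
  "symmetric_mat X \<longleftrightarrow> transpose X = X"

definition lsc_on :: "(real^'n) set \<Rightarrow> (real^'n \<Rightarrow> real) \<Rightarrow> bool" where
  "lsc_on S f \<longleftrightarrow> (\<forall>x\<in>S. \<forall>t<f x. eventually (\<lambda>y. t < f y) (at x within S))"

definition usc_on :: "(real^'n) set \<Rightarrow> (real^'n \<Rightarrow> real) \<Rightarrow> bool" where
  "usc_on S f \<longleftrightarrow> (\<forall>x\<in>S. \<forall>t>f x. eventually (\<lambda>y. f y < t) (at x within S))"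

definition C2_with :: "(real^'n \<Rightarrow> real) \<Rightarrow> (real^'n \<Rightarrow> real^'n) \<Rightarrow> (real^'n \<Rightarrow> real^'n^'n) \<Rightarrow> bool" where
  "C2_with \<phi> D\<phi> H\<phi> \<longleftrightarrow>
     (\<forall>y. (\<phi> has_derivative (\<lambda>h. D\<phi> y \<bullet> h)) (at y)) \<and>
     (\<forall>y. (D\<phi> has_derivative (\<lambda>h. H\<phi> y *v h)) (at y)) \<and>
     continuous_on UNIV H\<phi>"

definition visc_super ::
  "(real^'n \<Rightarrow> real \<Rightarrow> real^'n \<Rightarrow> real^'n^'n \<Rightarrow> real) \<Rightarrow> (real^'n) set \<Rightarrow> (real^'n \<Rightarrow> real) \<Rightarrow> bool" where
  "visc_super F Om v \<longleftrightarrow> lsc_on Om v \<and>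
     (\<forall>x0\<in>Om. \<forall>\<phi> D\<phi> H\<phi>. C2_with \<phi> D\<phi> H\<phi> \<longrightarrow>
        (\<exists>e>0. \<forall>y\<in>ball x0 e. v x0 - \<phi> x0 \<le> v y - \<phi> y) \<longrightarrow>
        F x0 (v x0) (D\<phi> x0) (H\<phi> x0) \<ge> 0)"

definition visc_sub ::
  "(real^'n \<Rightarrow> real \<Rightarrow> real^'n \<Rightarrow> real^'n^'n \<Rightarrow> real) \<Rightarrow> (real^'n) set \<Rightarrow> (real^'n \<Rightarrow> real) \<Rightarrow> bool" where
  "visc_sub F Om u \<longleftrightarrow> usc_on Om u \<and>
     (\<forall>x0\<in>Om. \<forall>\<phi> D\<phi> H\<phi>. C2_with \<phi> D\<phi> H\<phi> \<longrightarrow>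
        (\<exists>e>0. \<forall>y\<in>ball x0 e. u y - \<phi> y \<le> u x0 - \<phi> x0) \<longrightarrow>
        F x0 (u x0) (D\<phi> x0) (H\<phi> x0) \<le> 0)"

definition bellman ::
  "(real^'n \<Rightarrow> 'a \<Rightarrow> real^'n^'n) \<Rightarrow> (real^'n \<Rightarrow> 'a \<Rightarrow> real^'n) \<Rightarrow> (real^'n \<Rightarrow> 'a \<Rightarrow> real)
   \<Rightarrow> real^'n \<Rightarrow> real \<Rightarrow> real^'n \<Rightarrow> real^'n^'n \<Rightarrow> real" where
  "bellman a b c x t p X = (SUP \<alpha>. - trace (a x \<alpha> ** X) - b x \<alpha> \<bullet> p + c x \<alpha> * t)"

end

theory Submission
  imports Defs
begin

text \<open>Let \<open>m\<close> be the minimum of \<open>v\<close> on a ball \<open>B\<^sub>r\<close> outside of which \<open>W \<le> 0\<close> and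
  \<open>W\<close> is a subsolution. For \<open>k < m\<close> and \<open>\<epsilon> > 0\<close> the function \<open>k + \<epsilon> W\<close> is again a subsolution
  there (this needs \<open>c k \<le> 0\<close>, which is where \<open>v \<le> 0\<close> or \<open>c = 0\<close> enters), it lies below \<open>v\<close> on
  \<open>\<partial>B\<^sub>r\<close>, and by the growth condition also far out. The Comparison Principle on large annuli
  gives \<open>k + \<epsilon> W \<le> v\<close> outside \<open>B\<^sub>r\<close>; letting \<open>\<epsilon> \<rightarrow> 0\<close> and \<open>k \<rightarrow> m\<close> shows that \<open>m\<close> is the global
  minimum of \<open>v\<close>, and the Strong Minimum Principle (applied to \<open>v - m\<close> when \<open>c = 0\<close>) makes
  \<open>v\<close> constant.\<close>

lemma trace_scaleR: "trace (r *\<^sub>R (M::real^'n^'n)) = r * trace M"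
  by (simp add: trace_def sum_distrib_left)

lemma trace_transpose: "trace (transpose (M::'a::semiring_1^'n^'n)) = trace M"
  by (simp add: trace_def transpose_def)

lemma symmetric_mat_symmetric_part: "symmetric_mat ((1/2) *\<^sub>R (X + transpose (X::real^'n^'n)))"
  by (simp add: symmetric_mat_def transpose_def vec_eq_iff)

lemma trace_mult_symmetric_part:
  assumes "symmetric_mat (A::real^'n^'n)"
  shows "trace (A ** X) = trace (A ** ((1/2) *\<^sub>R (X + transpose X)))"
proof -
  have "trace (A ** transpose X) = trace (transpose X ** A)"
    by (rule trace_mul_sym)
  also have "transpose X ** A = transpose (A ** X)"
    using assms by (simp add: matrix_transpose_mul symmetric_mat_def)
  finally have "trace (A ** transpose X) = trace (A ** X)"
    by (simp add: trace_transpose)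
  then show ?thesis
    by (simp add: matrix_scalar_ac scalar_matrix_assoc[symmetric] trace_scaleR
        matrix_add_ldistrib trace_add)
qed

text \<open>The hypothesis on \<open>F\<close> only concerns symmetric \<open>X\<close>, while test functions in the definition
  of viscosity solutions have arbitrary Hessian matrices.\<close>

lemma bellman_terms_bdd_above:
  assumes a_sym: "\<And>x \<alpha>. symmetric_mat (a x \<alpha>)"
    and bdd_sym: "\<And>x t p X. symmetric_mat X \<Longrightarrow>
        bdd_above (range (\<lambda>\<alpha>. - trace (a x \<alpha> ** X) - b x \<alpha> \<bullet> p + c x \<alpha> * t))"
  shows "bdd_above (range (\<lambda>\<alpha>. - trace (a x \<alpha> ** X) - b x \<alpha> \<bullet> p + c x \<alpha> * t))"
proof -
  have "trace (a x \<alpha> ** X) = trace (a x \<alpha> ** ((1/2) *\<^sub>R (X + transpose X)))" for \<alpha>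
    by (rule trace_mult_symmetric_part[OF a_sym])
  then show ?thesis
    using bdd_sym[OF symmetric_mat_symmetric_part, of x X p t] by simp
qed

lemma bellman_affine_le:
  assumes bdd: "bdd_above (range (\<lambda>\<alpha>. - trace (a x \<alpha> ** X) - b x \<alpha> \<bullet> p + c x \<alpha> * t))"
    and "e > 0" and ck: "\<And>\<alpha>. c x \<alpha> * k \<le> 0"
  shows "bellman a b c x (k + e * t) (e *\<^sub>R p) (e *\<^sub>R X) \<le> e * bellman a b c x t p X"
  unfolding bellman_def
proof (rule cSUP_least)
  fix \<alpha>
  have "- trace (a x \<alpha> ** X) - b x \<alpha> \<bullet> p + c x \<alpha> * t
      \<le> (SUP \<alpha>. - trace (a x \<alpha> ** X) - b x \<alpha> \<bullet> p + c x \<alpha> * t)"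
    by (rule cSUP_upper[OF UNIV_I bdd])
  then have "e * (- trace (a x \<alpha> ** X) - b x \<alpha> \<bullet> p + c x \<alpha> * t)
      \<le> e * (SUP \<alpha>. - trace (a x \<alpha> ** X) - b x \<alpha> \<bullet> p + c x \<alpha> * t)"
    using \<open>e > 0\<close> by simp
  then show "- trace (a x \<alpha> ** (e *\<^sub>R X)) - b x \<alpha> \<bullet> (e *\<^sub>R p) + c x \<alpha> * (k + e * t)
      \<le> e * (SUP \<alpha>. - trace (a x \<alpha> ** X) - b x \<alpha> \<bullet> p + c x \<alpha> * t)"
    using ck[of \<alpha>]
    by (simp add: matrix_scalar_ac scalar_matrix_assoc[symmetric] trace_scaleR algebra_simps)
qed simp

lemma lsc_on_subset: "lsc_on T f \<Longrightarrow> S \<subseteq> T \<Longrightarrow> lsc_on S f"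
  unfolding lsc_on_def by (meson at_le filter_leD subsetD)

lemma usc_on_subset: "usc_on T f \<Longrightarrow> S \<subseteq> T \<Longrightarrow> usc_on S f"
  unfolding usc_on_def by (meson at_le filter_leD subsetD)

lemma usc_on_affine:
  assumes "usc_on S f" "e > 0"
  shows "usc_on S (\<lambda>y. k + e * f y)"
  unfolding usc_on_def
proof (intro ballI allI impI)
  fix x t assume "x \<in> S" "t > k + e * f x"
  then have "f x < (t - k) / e"
    using assms(2) by (simp add: field_simps)
  then have "eventually (\<lambda>y. f y < (t - k) / e) (at x within S)"
    using assms(1) \<open>x \<in> S\<close> unfolding usc_on_def by blast
  then show "eventually (\<lambda>y. k + e * f y < t) (at x within S)"
    by eventually_elim (use assms(2) in \<open>simp add: field_simps\<close>)
qed

lemma lsc_on_diff_const: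
  assumes "lsc_on S f"
  shows "lsc_on S (\<lambda>y. f y - k)"
  unfolding lsc_on_def
proof (intro ballI allI impI)
  fix x t assume "x \<in> S" "t < f x - k"
  then have "eventually (\<lambda>y. t + k < f y) (at x within S)"
    using assms unfolding lsc_on_def by simp
  then show "eventually (\<lambda>y. t < f y - k) (at x within S)"
    by eventually_elim simp
qed

lemma lsc_on_UNIV_closed_sublevel:
  assumes "lsc_on UNIV f"
  shows "closed {x. f x \<le> t}"
proof -
  have "\<exists>T. open T \<and> x \<in> T \<and> T \<subseteq> {z. t < f z}" if "t < f x" for x
  proof -
    have "eventually (\<lambda>y. t < f y) (nhds x)"
      using assms that unfolding lsc_on_def by (simp add: eventually_nhds_conv_at)
    then show ?thesis
      unfolding eventually_nhds by blast
  qed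
  then have "open {z. t < f z}"
    by (subst open_subopen) blast
  then show ?thesis
    by (simp add: closed_def Compl_eq not_le)
qed

lemma lsc_on_attains_min:
  assumes "lsc_on UNIV f" "compact K" "K \<noteq> {}"
  shows "\<exists>x\<in>K. \<forall>y\<in>K. f x \<le> f y"
proof -
  have "K \<inter> (\<Inter>i\<in>K. {x. f x \<le> f i}) \<noteq> {}"
  proof (rule compact_imp_fip_image[OF assms(2)])
    fix i show "closed {x. f x \<le> f i}"
      by (rule lsc_on_UNIV_closed_sublevel[OF assms(1)])
  next
    fix I assume I: "finite I" "I \<subseteq> K"
    show "K \<inter> (\<Inter>i\<in>I. {x. f x \<le> f i}) \<noteq> {}"
    proof (cases "I = {}")
      case True
      then show ?thesis using assms(3) by simp
    next
      case False
      have "Min (f ` I) \<in> f ` I"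
        using I(1) \<open>I \<noteq> {}\<close> by simp
      then obtain j where "j \<in> I" "f j = Min (f ` I)"
        by (metis imageE)
      then have "j \<in> K \<inter> (\<Inter>i\<in>I. {x. f x \<le> f i})"
        using I by auto
      then show ?thesis by blast
    qed
  qed
  then show ?thesis by blast
qed

lemma C2_with_affine:
  assumes "C2_with \<phi> D\<phi> H\<phi>"
  shows "C2_with (\<lambda>y. r * \<phi> y + k) (\<lambda>y. r *\<^sub>R D\<phi> y) (\<lambda>y. r *\<^sub>R H\<phi> y)"
  unfolding C2_with_def
proof (intro conjI allI)
  fix y
  have "(\<phi> has_derivative (\<lambda>h. D\<phi> y \<bullet> h)) (at y)"
    using assms unfolding C2_with_def by blast
  then show "((\<lambda>y. r * \<phi> y + k) has_derivative (\<lambda>h. r *\<^sub>R D\<phi> y \<bullet> h)) (at y)"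
    by (auto intro!: derivative_eq_intros)
  have "(D\<phi> has_derivative (\<lambda>h. H\<phi> y *v h)) (at y)"
    using assms unfolding C2_with_def by blast
  then have "((\<lambda>y. r *\<^sub>R D\<phi> y) has_derivative (\<lambda>h. r *\<^sub>R (H\<phi> y *v h))) (at y)"
    by (intro derivative_intros)
  then show "((\<lambda>y. r *\<^sub>R D\<phi> y) has_derivative (\<lambda>h. (r *\<^sub>R H\<phi> y) *v h)) (at y)"
    by (simp add: scaleR_matrix_vector_assoc)
next
  show "continuous_on UNIV (\<lambda>y. r *\<^sub>R H\<phi> y)"
    using assms unfolding C2_with_def by (intro continuous_intros) auto
qed

lemma visc_super_subset: "visc_super F T v \<Longrightarrow> S \<subseteq> T \<Longrightarrow> visc_super F S v"
  unfolding visc_super_def using lsc_on_subset by blast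

lemma visc_sub_subset: "visc_sub F T u \<Longrightarrow> S \<subseteq> T \<Longrightarrow> visc_sub F S u"
  unfolding visc_sub_def using usc_on_subset by blast

lemma visc_sub_bellman_affine:
  assumes bdd: "\<And>x t p X.
        bdd_above (range (\<lambda>\<alpha>. - trace (a x \<alpha> ** X) - b x \<alpha> \<bullet> p + c x \<alpha> * t))"
    and W_sub: "visc_sub (bellman a b c) S W"
    and "e > 0" and ck: "\<And>x \<alpha>. c x \<alpha> * k \<le> 0"
  shows "visc_sub (bellman a b c) S (\<lambda>y. k + e * W y)"
  unfolding visc_sub_def
proof (intro conjI ballI allI impI)
  show "usc_on S (\<lambda>y. k + e * W y)"
    using W_sub \<open>e > 0\<close> unfolding visc_sub_def by (simp add: usc_on_affine)
next
  fix x0 \<phi> D\<phi> H\<phi>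
  assume "x0 \<in> S" and C2: "C2_with \<phi> D\<phi> H\<phi>"
    and touch: "\<exists>r>0. \<forall>y\<in>ball x0 r. k + e * W y - \<phi> y \<le> k + e * W x0 - \<phi> x0"
  define \<psi> where "\<psi> = (\<lambda>y. (1/e) * \<phi> y + - k / e)"
  have "C2_with \<psi> (\<lambda>y. (1/e) *\<^sub>R D\<phi> y) (\<lambda>y. (1/e) *\<^sub>R H\<phi> y)"
    unfolding \<psi>_def by (rule C2_with_affine[OF C2])
  moreover have "W y - \<psi> y \<le> W x0 - \<psi> x0"
    if "k + e * W y - \<phi> y \<le> k + e * W x0 - \<phi> x0" for y
  proof -
    have "e * (W y - \<psi> y) \<le> e * (W x0 - \<psi> x0)"
      using that \<open>e > 0\<close> by (simp add: \<psi>_def algebra_simps)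
    then show ?thesis
      using \<open>e > 0\<close> by simp
  qed
  then have "\<exists>r>0. \<forall>y\<in>ball x0 r. W y - \<psi> y \<le> W x0 - \<psi> x0"
    using touch by blast
  ultimately have "bellman a b c x0 (W x0) ((1/e) *\<^sub>R D\<phi> x0) ((1/e) *\<^sub>R H\<phi> x0) \<le> 0"
    using W_sub \<open>x0 \<in> S\<close> unfolding visc_sub_def by blast
  moreover have "bellman a b c x0 (k + e * W x0) (e *\<^sub>R (1/e) *\<^sub>R D\<phi> x0) (e *\<^sub>R (1/e) *\<^sub>R H\<phi> x0)
      \<le> e * bellman a b c x0 (W x0) ((1/e) *\<^sub>R D\<phi> x0) ((1/e) *\<^sub>R H\<phi> x0)"
    by (rule bellman_affine_le[OF bdd \<open>e > 0\<close> ck])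
  moreover have "e *\<^sub>R (1/e) *\<^sub>R D\<phi> x0 = D\<phi> x0" "e *\<^sub>R (1/e) *\<^sub>R H\<phi> x0 = H\<phi> x0"
    using \<open>e > 0\<close> by simp_all
  ultimately show "bellman a b c x0 (k + e * W x0) (D\<phi> x0) (H\<phi> x0) \<le> 0"
    using \<open>e > 0\<close> mult_nonneg_nonpos[of e] by (metis order_trans less_imp_le)
qed

lemma visc_super_bellman_diff_const:
  assumes v_super: "visc_super (bellman a b c) S v" and c0: "\<And>x \<alpha>. c x \<alpha> = 0"
  shows "visc_super (bellman a b c) S (\<lambda>y. v y - k)"
  unfolding visc_super_def
proof (intro conjI ballI allI impI)
  show "lsc_on S (\<lambda>y. v y - k)"
    using v_super lsc_on_diff_const unfolding visc_super_def by blast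
next
  fix x0 \<phi> D\<phi> H\<phi>
  assume "x0 \<in> S" and C2: "C2_with \<phi> D\<phi> H\<phi>"
    and touch: "\<exists>r>0. \<forall>y\<in>ball x0 r. v x0 - k - \<phi> x0 \<le> v y - k - \<phi> y"
  have "C2_with (\<lambda>y. \<phi> y + k) D\<phi> H\<phi>"
    using C2_with_affine[OF C2, of 1 k] by simp
  moreover have "\<exists>r>0. \<forall>y\<in>ball x0 r. v x0 - (\<phi> x0 + k) \<le> v y - (\<phi> y + k)"
    using touch by (simp add: algebra_simps)
  ultimately have "bellman a b c x0 (v x0) (D\<phi> x0) (H\<phi> x0) \<ge> 0"
    using v_super \<open>x0 \<in> S\<close> unfolding visc_super_def by blast
  then show "bellman a b c x0 (v x0 - k) (D\<phi> x0) (H\<phi> x0) \<ge> 0"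
    by (simp add: bellman_def c0)
qed

lemma comparison_exterior_ball:
  fixes u v :: "real^'n \<Rightarrow> real"
  assumes comparison: "\<And>\<Omega>. open \<Omega> \<Longrightarrow> bounded \<Omega> \<Longrightarrow>
        usc_on (closure \<Omega>) u \<Longrightarrow> lsc_on (closure \<Omega>) v \<Longrightarrow>
        visc_sub F \<Omega> u \<Longrightarrow> visc_super F \<Omega> v \<Longrightarrow>
        (\<forall>x\<in>frontier \<Omega>. u x \<le> v x) \<Longrightarrow> \<forall>x\<in>\<Omega>. u x \<le> v x"
    and u_usc: "usc_on UNIV u" and u_sub: "visc_sub F {y. r < norm y} u"
    and v_super: "visc_super F UNIV v"
    and sphere: "\<And>y. norm y = r \<Longrightarrow> u y \<le> v y"
    and far: "eventually (\<lambda>y. u y \<le> v y) at_infinity"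
    and "r < norm x"
  shows "u x \<le> v x"
proof -
  obtain R0 where R0: "\<And>y. R0 \<le> norm y \<Longrightarrow> u y \<le> v y"
    using far unfolding eventually_at_infinity by blast
  define R where "R = max R0 (norm x + 1)"
  define \<Omega> where "\<Omega> = {y::real^'n. r < norm y \<and> norm y < R}"
  have "open \<Omega>"
    unfolding \<Omega>_def by (intro open_Collect_conj open_Collect_less continuous_intros)
  have "bounded \<Omega>"
    by (rule bounded_subset[OF bounded_ball[of 0 R]]) (auto simp: \<Omega>_def)
  have "closure \<Omega> \<subseteq> {y. r \<le> norm y \<and> norm y \<le> R}"
    by (rule closure_minimal)
      (auto simp: \<Omega>_def intro!: closed_Collect_conj closed_Collect_le continuous_intros)
  have "u y \<le> v y" if "y \<in> frontier \<Omega>" for y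
  proof -
    have "y \<in> closure \<Omega>" "y \<notin> \<Omega>"
      using that \<open>open \<Omega>\<close> by (auto simp: frontier_def interior_open)
    then have "norm y = r \<or> R0 \<le> norm y"
      using \<open>closure \<Omega> \<subseteq> _\<close> unfolding \<Omega>_def R_def by fastforce
    then show ?thesis
      using sphere R0 by blast
  qed
  moreover have "visc_sub F \<Omega> u"
    by (rule visc_sub_subset[OF u_sub]) (auto simp: \<Omega>_def)
  moreover have "usc_on (closure \<Omega>) u" "lsc_on (closure \<Omega>) v"
    using u_usc v_super by (auto simp: visc_super_def intro: usc_on_subset lsc_on_subset)
  ultimately have "\<forall>y\<in>\<Omega>. u y \<le> v y"
    using comparison[OF \<open>open \<Omega>\<close> \<open>bounded \<Omega>\<close>] visc_super_subset[OF v_super] by blast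
  moreover have "x \<in> \<Omega>"
    using \<open>r < norm x\<close> by (simp add: \<Omega>_def R_def)
  ultimately show ?thesis by blast
qed

lemma eventually_affine_below:
  fixes v W :: "'a \<Rightarrow> real"
  assumes growth: "Limsup F (\<lambda>x. ereal (v x / W x)) \<le> 0"
    and W_lim: "filterlim W at_bot F" and "\<epsilon> > 0"
  shows "eventually (\<lambda>x. k + \<epsilon> * W x \<le> v x) F"
proof -
  have "eventually (\<lambda>x. ereal (v x / W x) < ereal (\<epsilon>/2)) F"
    using \<open>\<epsilon> > 0\<close> by (intro Limsup_lessD order_le_less_trans[OF growth]) simp
  moreover have "eventually (\<lambda>x. W x \<le> min (-1) (-2 * k / \<epsilon>)) F"
    by (rule filterlim_at_bot[THEN iffD1, OF W_lim, rule_format])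
  ultimately show ?thesis
  proof eventually_elim
    case (elim x)
    then have "W x < 0" and "\<epsilon> * W x \<le> -2 * k"
      using \<open>\<epsilon> > 0\<close> by (auto simp: field_simps)
    moreover have "\<epsilon>/2 * W x < v x"
      using elim \<open>W x < 0\<close> by (simp add: pos_less_divide_eq neg_divide_less_eq mult.commute)
    ultimately show ?case by linarith
  qed
qed

lemma le_of_affine_lower_bounds:
  fixes m w y :: real
  assumes "\<And>k \<epsilon>. k < m \<Longrightarrow> 0 < \<epsilon> \<Longrightarrow> k + \<epsilon> * w \<le> y"
  shows "m \<le> y"
proof (rule dense_le, rule field_le_epsilon)
  fix k e :: real assume "k < m" "0 < e"
  then have "k + e / (\<bar>w\<bar> + 1) * w \<le> y"
    by (intro assms) auto
  moreover have "e / (\<bar>w\<bar> + 1) * - w \<le> e / (\<bar>w\<bar> + 1) * \<bar>w\<bar>"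
    using \<open>0 < e\<close> by (intro mult_left_mono) auto
  moreover have "e / (\<bar>w\<bar> + 1) * \<bar>w\<bar> \<le> e"
    using \<open>0 < e\<close> by (simp add: field_simps)
  ultimately show "k \<le> y + e" by linarith
qed

lemma bellman_super_ge_min_on_ball:
  fixes W v :: "real^'n \<Rightarrow> real"
  assumes bdd: "\<And>x t p X.
        bdd_above (range (\<lambda>\<alpha>. - trace (a x \<alpha> ** X) - b x \<alpha> \<bullet> p + c x \<alpha> * t))"
    and comparison: "\<And>\<Omega> u w. open \<Omega> \<Longrightarrow> bounded \<Omega> \<Longrightarrow>
        usc_on (closure \<Omega>) u \<Longrightarrow> lsc_on (closure \<Omega>) w \<Longrightarrow>
        visc_sub (bellman a b c) \<Omega> u \<Longrightarrow> visc_super (bellman a b c) \<Omega> w \<Longrightarrow>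
        (\<forall>x\<in>frontier \<Omega>. u x \<le> w x) \<Longrightarrow> \<forall>x\<in>\<Omega>. u x \<le> w x"
    and W_usc: "usc_on UNIV W" and W_sub: "visc_sub (bellman a b c) {y. r < norm y} W"
    and W_lim: "filterlim W at_bot at_infinity"
    and W_sphere: "\<And>y. norm y = r \<Longrightarrow> W y \<le> 0"
    and v_super: "visc_super (bellman a b c) UNIV v"
    and v_growth: "Limsup at_infinity (\<lambda>x. ereal (v x / W x)) \<le> 0"
    and v_ball: "\<And>y. norm y \<le> r \<Longrightarrow> m \<le> v y"
    and ck: "\<And>k x \<alpha>. k < m \<Longrightarrow> c x \<alpha> * k \<le> 0"
  shows "m \<le> v x"
proof (cases "norm x \<le> r")
  case False
  have "k + \<epsilon> * W x \<le> v x" if "k < m" "0 < \<epsilon>" for k \<epsilon>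
  proof (rule comparison_exterior_ball[where F = "bellman a b c",
        OF _ usc_on_affine[OF W_usc \<open>0 < \<epsilon>\<close>] _ v_super])
    show "visc_sub (bellman a b c) {y. r < norm y} (\<lambda>y. k + \<epsilon> * W y)"
      by (rule visc_sub_bellman_affine[OF bdd W_sub \<open>0 < \<epsilon>\<close> ck[OF \<open>k < m\<close>]])
    show "k + \<epsilon> * W y \<le> v y" if "norm y = r" for y
      using v_ball[of y] W_sphere[of y] \<open>k < m\<close> \<open>0 < \<epsilon>\<close> that
        mult_nonneg_nonpos[of \<epsilon> "W y"] by linarith
    show "eventually (\<lambda>y. k + \<epsilon> * W y \<le> v y) at_infinity"
      by (rule eventually_affine_below[OF v_growth W_lim \<open>0 < \<epsilon>\<close>])
    show "r < norm x"
      using False by simp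
  qed (rule comparison)
  then show ?thesis
    by (rule le_of_affine_lower_bounds)
qed (rule v_ball)

theorem theorem2p3:
  fixes a :: "real^'n \<Rightarrow> 'a::metric_space \<Rightarrow> real^'n^'n"
    and b :: "real^'n \<Rightarrow> 'a \<Rightarrow> real^'n"
    and c :: "real^'n \<Rightarrow> 'a \<Rightarrow> real"
    and W v :: "real^'n \<Rightarrow> real"
    and R\<^sub>o :: real
  assumes a_sym: "\<And>x \<alpha>. symmetric_mat (a x \<alpha>)"
    and a_cont: "continuous_on UNIV (\<lambda>(x, \<alpha>). a x \<alpha>)"
    and b_cont: "continuous_on UNIV (\<lambda>(x, \<alpha>). b x \<alpha>)"
    and c_cont: "continuous_on UNIV (\<lambda>(x, \<alpha>). c x \<alpha>)"
    \<comment> \<open>(i)\<close>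
    and F_finite: "\<And>x t p X. symmetric_mat X \<Longrightarrow>
        bdd_above (range (\<lambda>\<alpha>. - trace (a x \<alpha> ** X) - b x \<alpha> \<bullet> p + c x \<alpha> * t))"
    and F_cont: "continuous_on {(x, t, p, X). symmetric_mat X}
        (\<lambda>(x, t, p, X). bellman a b c x t p X)"
    and c_nonneg: "\<And>x \<alpha>. c x \<alpha> \<ge> 0"
    and comparison: "\<And>\<Omega> u w. open \<Omega> \<Longrightarrow> bounded \<Omega> \<Longrightarrow>
        usc_on (closure \<Omega>) u \<Longrightarrow> lsc_on (closure \<Omega>) w \<Longrightarrow>
        visc_sub (bellman a b c) \<Omega> u \<Longrightarrow> visc_super (bellman a b c) \<Omega> w \<Longrightarrow>
        (\<forall>x\<in>frontier \<Omega>. u x \<le> w x) \<Longrightarrow> \<forall>x\<in>\<Omega>. u x \<le> w x"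
    \<comment> \<open>(ii)\<close>
    and strong_min: "\<And>w x0. visc_super (bellman a b c) UNIV w \<Longrightarrow>
        (\<forall>y. w x0 \<le> w y) \<Longrightarrow> w x0 \<le> 0 \<Longrightarrow> (\<forall>y. w y = w x0)"
    \<comment> \<open>(iii)\<close>
    and R_nonneg: "R\<^sub>o \<ge> 0"
    and W_usc: "usc_on UNIV W"
    and W_sub: "visc_sub (bellman a b c) {x. norm x > R\<^sub>o} W"
    and W_lim: "filterlim W at_bot at_infinity"
    \<comment> \<open>the function v\<close>
    and v_super: "visc_super (bellman a b c) UNIV v"
    and v_growth: "Limsup at_infinity (\<lambda>x. ereal (v x / W x)) \<le> 0"
    and alt: "(\<forall>x. v x \<le> 0) \<or> (\<forall>x \<alpha>. c x \<alpha> = 0)"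
  shows "\<exists>k. \<forall>x. v x = k"
proof -
  obtain r where "R\<^sub>o < r" and W_nonpos: "\<And>y. r \<le> norm y \<Longrightarrow> W y \<le> 0"
  proof -
    obtain r0 where "\<And>y. r0 \<le> norm y \<Longrightarrow> W y \<le> 0"
      using W_lim by (auto simp: filterlim_at_bot eventually_at_infinity)
    then show thesis
      by (intro that[of "max r0 (R\<^sub>o + 1)"]) auto
  qed
  have "\<exists>x0\<in>cball 0 r. \<forall>y\<in>cball 0 r. v x0 \<le> v y"
    using v_super R_nonneg \<open>R\<^sub>o < r\<close>
    by (intro lsc_on_attains_min) (auto simp: visc_super_def)
  then obtain x0 where min_ball: "\<And>y. norm y \<le> r \<Longrightarrow> v x0 \<le> v y"
    by (metis mem_cball_0)
  have bdd: "bdd_above (range (\<lambda>\<alpha>. - trace (a x \<alpha> ** X) - b x \<alpha> \<bullet> p + c x \<alpha> * t))"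
    for x t p X
    by (rule bellman_terms_bdd_above[OF a_sym F_finite])
  have "c x \<alpha> * k \<le> 0" if "k < v x0" for k x \<alpha>
  proof -
    have "k \<le> 0 \<or> c x \<alpha> = 0"
      using alt that by (meson order_trans less_imp_le)
    then show ?thesis
      using c_nonneg[of x \<alpha>] mult_nonneg_nonpos by auto
  qed
  moreover have "visc_sub (bellman a b c) {y. r < norm y} W"
    using \<open>R\<^sub>o < r\<close> by (intro visc_sub_subset[OF W_sub]) auto
  ultimately have v_min: "v x0 \<le> v x" for x
    using W_nonpos by (intro bellman_super_ge_min_on_ball[OF bdd comparison W_usc _ W_lim _
        v_super v_growth min_ball]) auto
  show ?thesis
  proof (cases "\<forall>x. v x \<le> 0")
    case True
    have "\<forall>y. v y = v x0"
      by (rule strong_min[OF v_super]) (use v_min True in auto)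
    then show ?thesis by blast
  next
    case False
    then have "\<And>x \<alpha>. c x \<alpha> = 0"
      using alt by blast
    then have "\<forall>y. v y - v x0 = v x0 - v x0"
      by (rule strong_min[OF visc_super_bellman_diff_const[OF v_super]]) (use v_min in auto)
    then show ?thesis by auto
  qed
qed

end
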